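(* Write $\dfrac{(q;q)_\infty^3}{(q^3;q^3)_\infty^2}=\sum_{n\ge0}a_nq^n$. Then for all $n\ge0$: $a_n>0$ if $n\equiv0\pmod3$, $a_n<0$ if $n\equiv1\pmod3$, and $a_n=0$ if $n\equiv2\pmod3$.
   Context: For $|q|<1$, $(a;q)_\infty=\prod_{k\ge0}(1-aq^k)$. *)

theory Defs
  imports "HOL-Analysis.Analysis"
begin

definition qpoch :: "complex \<Rightarrow> complex \<Rightarrow> complex" where
  "qpoch a q = (\<Prod>k. 1 - a * q ^ k)"

end

(*
  Euler's pentagonal theorem writes (q;q)_inf as P(q) = sum_j (-1)^j q^(j(3j+1)/2). Both its
  formal and its analytic form come from Shanks' finite identity, whose k = 0 term is the partial
  product (1 - q)...(1 - q^n) while all other terms are O(q^(n+1)).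

  Expanding P^3 as a sum over triples (j1, j2, j3) and sorting the triples by j1 + j2 + j3 mod 3
  gives Borwein's dissection P(q)^3 = P(q^3) (a(q^3) - c(q^3)), where a(q) = sum q^(u^2+uv+v^2)
  and c(q) = sum q^(u^2+uv+v^2+u+v+1/3): the triples with sum 1 mod 3 cancel in pairs under
  s -> -1 - s, and the classes 0 and 2 are parametrised by (s, u, v) -> (s+u, s+v, s+r-u-v) with
  r = 0 and r = -1.
  Hence the quotient is (a(q^3) - c(q^3)) / P(q^3). Now 1/P, the partition generating function,
  has positive coefficients, and a(q), q^(-1/3) c(q) have nonnegative coefficients with constant
  term 1, so the coefficients are positive, negative and zero on the classes 0, 1 and 2 mod 3.
*)

theory Submission
  imports Defs
begin

no_notation vec_nth (infixl "$" 90)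
notation fps_nth (infixl "$" 75)

section \<open>Shanks' finite form of the pentagonal theorem\<close>

definition triangular :: "nat \<Rightarrow> nat" where
  "triangular k = k * (k + 1) div 2"

definition pentagonal :: "int \<Rightarrow> nat" where
  "pentagonal j = nat (j * (3 * j + 1) div 2)"

definition neg_one_pow :: "int \<Rightarrow> 'a::comm_ring_1" where
  "neg_one_pow j = (if even j then 1 else - 1)"

lemma two_triangular: "2 * int (triangular k) = int k * (int k + 1)"
proof -
  have "2 * triangular k = k * (k + 1)" unfolding triangular_def by simp
  then show ?thesis by (metis of_nat_add of_nat_mult of_nat_1 of_nat_numeral)
qed

lemma triangular_Suc: "triangular (Suc k) = triangular k + k + 1"
  using two_triangular[of k] two_triangular[of "Suc k"] by (simp add: algebra_simps)

lemma triangular_ge_1: "k \<ge> 1 \<Longrightarrow> triangular k \<ge> 1"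
  by (cases k) (auto simp: triangular_Suc)

lemma two_pentagonal: "2 * int (pentagonal j) = j * (3 * j + 1)"
proof -
  have "even (j * (3 * j + 1))" by auto
  moreover have "j * (3 * j + 1) \<ge> 0"
    by (cases "j \<ge> 0") (auto simp: mult_nonneg_nonneg mult_nonpos_nonpos)
  ultimately show ?thesis unfolding pentagonal_def by auto
qed

lemma pentagonal_of_nat_Suc: "pentagonal (int (Suc n)) = (n + 1) * (n + 1) + triangular (n + 1)"
proof -
  have "int (pentagonal (int (Suc n))) = int ((n + 1) * (n + 1) + triangular (n + 1))"
    using two_pentagonal[of "int (Suc n)"] two_triangular[of "n + 1"] by (simp add: algebra_simps)
  then show ?thesis by (simp only: of_nat_eq_iff)
qed

lemma pentagonal_neg_of_nat_Suc: "pentagonal (- int (Suc n)) = n * (n + 1) + triangular (n + 1)"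
proof -
  have "int (pentagonal (- int (Suc n))) = int (n * (n + 1) + triangular (n + 1))"
    using two_pentagonal[of "- int (Suc n)"] two_triangular[of "n + 1"] by (simp add: algebra_simps)
  then show ?thesis by (simp only: of_nat_eq_iff)
qed

lemma abs_le_pentagonal: "\<bar>j\<bar> \<le> int (pentagonal j)"
proof -
  have "2 * \<bar>j\<bar> \<le> j * (3 * j + 1)"
  proof (cases "j \<ge> 0")
    case True
    then have "0 \<le> j * (3 * j - 1) \<or> j = 0" by (auto intro: mult_nonneg_nonneg)
    then show ?thesis using True by (auto simp: algebra_simps)
  next
    case False
    then have "0 \<le> (- j) * (- j - 1)" by (intro mult_nonneg_nonneg) auto
    then show ?thesis using False by (simp add: algebra_simps)
  qed
  then show ?thesis using two_pentagonal[of j] by linarith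
qed

lemma pentagonal_eq_0_iff: "pentagonal j = 0 \<longleftrightarrow> j = 0"
proof
  assume "pentagonal j = 0"
  then show "j = 0" using abs_le_pentagonal[of j] by simp
qed (simp add: pentagonal_def)

lemma inj_pentagonal: "inj pentagonal"
proof (rule injI)
  fix a b assume "pentagonal a = pentagonal b"
  then have "(a - b) * (3 * a + 3 * b + 1) = 0"
    using two_pentagonal[of a] two_pentagonal[of b] by (simp add: algebra_simps)
  moreover have "3 * a + 3 * b + 1 \<noteq> 0" by presburger
  ultimately show "a = b" by simp
qed

lemma neg_one_pow_of_nat: "neg_one_pow (int m) = (- 1) ^ m"
  unfolding neg_one_pow_def by (induction m) auto

lemma neg_one_pow_uminus: "neg_one_pow (- j) = neg_one_pow j"
  unfolding neg_one_pow_def by simp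

lemma neg_one_pow_add: "neg_one_pow (i + j) = neg_one_pow i * neg_one_pow j"
  unfolding neg_one_pow_def by auto

lemma neg_one_pow_diff_1: "neg_one_pow (j - 1) = - neg_one_pow j"
  unfolding neg_one_pow_def by auto

lemma neg_one_pow_mult_3: "neg_one_pow (3 * j) = neg_one_pow j"
  unfolding neg_one_pow_def by simp

lemma norm_neg_one_pow [simp]: "norm (neg_one_pow j :: 'a::{comm_ring_1, real_normed_algebra_1}) = 1"
  unfolding neg_one_pow_def by simp

definition shanks_sum :: "nat \<Rightarrow> 'a::comm_ring_1 \<Rightarrow> 'a" where
  "shanks_sum n q = (\<Sum>k\<le>n. (- 1) ^ k * q ^ (n * k + triangular k) * (\<Prod>i\<in>{k + 1..n}. 1 - q ^ i))"

definition pentagonal_sum :: "nat \<Rightarrow> 'a::comm_ring_1 \<Rightarrow> 'a" where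
  "pentagonal_sum n q = (\<Sum>j\<in>{- int n..int n}. neg_one_pow j * q ^ pentagonal j)"

lemma shanks_sum_Suc:
  fixes q :: "'a::comm_ring_1"
  shows "shanks_sum (Suc n) q = shanks_sum n q
           + (- 1) ^ (n + 1) * (q ^ (n * (n + 1) + triangular (n + 1)) + q ^ ((n + 1) * (n + 1) + triangular (n + 1)))"
proof -
  define f where "f m k = (- 1) ^ k * q ^ (m * k + triangular k) * (\<Prod>i\<in>{k + 1..m}. 1 - q ^ i)" for m k
  define h where "h k = (- 1) ^ Suc k * q ^ (n * k + triangular k) * (\<Prod>i\<in>{k..n}. 1 - q ^ i)" for k
  have step: "f (Suc n) k = f n k + (h k - h (Suc k))" if "k \<le> n" for k
  proof -
    define P where "P = (\<Prod>i\<in>{k + 1..n}. 1 - q ^ i)"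
    define e where "e = n * k + triangular k"
    have "(\<Prod>i\<in>{k + 1..Suc n}. 1 - q ^ i) = P * (1 - q ^ Suc n)"
      unfolding P_def using that by (simp add: prod.cl_ivl_Suc)
    moreover have "(\<Prod>i\<in>{k..n}. 1 - q ^ i) = (1 - q ^ k) * P"
      unfolding P_def using that by (simp add: prod.atLeast_Suc_atMost)
    moreover have "(\<Prod>i\<in>{Suc k..n}. 1 - q ^ i) = P" unfolding P_def by simp
    moreover have "Suc n * k + triangular k = e + k" "n * Suc k + triangular (Suc k) = e + n + k + 1"
      unfolding e_def by (simp_all add: triangular_Suc)
    ultimately show ?thesis unfolding f_def h_def e_def[symmetric]
      by (simp only: power_add) (simp add: algebra_simps)
  qed
  have "shanks_sum (Suc n) q = (\<Sum>k\<le>n. f (Suc n) k) + f (Suc n) (Suc n)"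
    unfolding shanks_sum_def f_def by simp
  also have "(\<Sum>k\<le>n. f (Suc n) k) = (\<Sum>k\<le>n. f n k) + (\<Sum>k<Suc n. h k - h (Suc k))"
    using step by (simp add: sum.distrib lessThan_Suc_atMost)
  also have "(\<Sum>k<Suc n. h k - h (Suc k)) = h 0 - h (Suc n)"
    by (rule sum_lessThan_telescope')
  also have "(\<Sum>k\<le>n. f n k) = shanks_sum n q" unfolding shanks_sum_def f_def by simp
  also have "h 0 = 0" unfolding h_def by (simp add: prod.atLeast_Suc_atMost[of 0 n])
  finally show ?thesis by (simp add: f_def h_def algebra_simps)
qed

lemma shanks_identity: "shanks_sum n q = pentagonal_sum n q"
proof (induction n)
  case 0
  then show ?case by (simp add: shanks_sum_def pentagonal_sum_def triangular_def pentagonal_def neg_one_pow_def)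
next
  case (Suc n)
  have ivl: "{- int (Suc n)..int (Suc n)} = insert (- int (Suc n)) (insert (int (Suc n)) {- int n..int n})"
    by auto
  have "pentagonal_sum (Suc n) q = neg_one_pow (- int (Suc n)) * q ^ pentagonal (- int (Suc n))
      + (neg_one_pow (int (Suc n)) * q ^ pentagonal (int (Suc n)) + pentagonal_sum n q)"
    unfolding pentagonal_sum_def ivl by (subst sum.insert; simp)+
  also have "\<dots> = pentagonal_sum n q
      + (- 1) ^ (n + 1) * (q ^ (n * (n + 1) + triangular (n + 1)) + q ^ ((n + 1) * (n + 1) + triangular (n + 1)))"
    unfolding neg_one_pow_uminus neg_one_pow_of_nat pentagonal_of_nat_Suc pentagonal_neg_of_nat_Suc
    by (simp add: algebra_simps)
  finally show ?case using Suc shanks_sum_Suc[of n q] by simp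
qed

section \<open>Generating functions of weighted sets\<close>

text \<open>Only meaningful when every fibre of the weight is finite: an infinite fibre contributes 0.\<close>

definition weighted_fps :: "'x set \<Rightarrow> ('x \<Rightarrow> nat) \<Rightarrow> ('x \<Rightarrow> 'a::comm_monoid_add) \<Rightarrow> 'a fps" where
  "weighted_fps A w c = Abs_fps (\<lambda>n. \<Sum>x\<in>{x\<in>A. w x = n}. c x)"

definition finite_fibres :: "'x set \<Rightarrow> ('x \<Rightarrow> nat) \<Rightarrow> bool" where
  "finite_fibres A w \<longleftrightarrow> (\<forall>n. finite {x\<in>A. w x = n})"

lemma weighted_fps_nth: "weighted_fps A w c $ n = (\<Sum>x\<in>{x\<in>A. w x = n}. c x)"
  unfolding weighted_fps_def by simp

lemma finite_fibresD: "finite_fibres A w \<Longrightarrow> finite {x\<in>A. w x = n}"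
  unfolding finite_fibres_def by blast

lemma finite_fibres_bounded:
  assumes "\<And>x. x \<in> A \<Longrightarrow> x \<in> B (w x)" and "\<And>n. finite (B n)"
  shows "finite_fibres A w"
  unfolding finite_fibres_def
proof
  fix n
  have "{x\<in>A. w x = n} \<subseteq> B n" using assms(1) by auto
  then show "finite {x\<in>A. w x = n}" using assms(2) by (rule finite_subset)
qed

lemma finite_fibres_atMost:
  assumes "finite_fibres A w"
  shows "finite {x\<in>A. w x \<le> n}"
proof -
  have "{x\<in>A. w x \<le> n} = (\<Union>i\<le>n. {x\<in>A. w x = i})" by auto
  then show ?thesis using assms by (simp add: finite_fibresD)
qed

lemma finite_fibres_subset: "finite_fibres A w \<Longrightarrow> B \<subseteq> A \<Longrightarrow> finite_fibres B w"
  unfolding finite_fibres_def by (auto intro: finite_subset[rotated])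

lemma finite_fibres_Times:
  assumes "finite_fibres A w" "finite_fibres B v"
  shows "finite_fibres (A \<times> B) (\<lambda>(x, y). w x + v y)"
proof (rule finite_fibres_bounded[where B = "\<lambda>n. {x\<in>A. w x \<le> n} \<times> {y\<in>B. v y \<le> n}"])
  show "finite ({x\<in>A. w x \<le> n} \<times> {y\<in>B. v y \<le> n})" for n
    using finite_fibres_atMost[OF assms(1)] finite_fibres_atMost[OF assms(2)] by blast
qed auto

lemma finite_fibres_mult_weight:
  assumes "finite_fibres A w" "k > 0"
  shows "finite_fibres A (\<lambda>x. k * w x)"
proof (rule finite_fibres_bounded[where B = "\<lambda>n. {x\<in>A. w x \<le> n}"])
  show "finite {x\<in>A. w x \<le> n}" for n using finite_fibres_atMost[OF assms(1)] .
qed (use assms(2) in auto)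

lemma finite_fibres_reindex:
  assumes "bij_betw h B A" "finite_fibres A w"
  shows "finite_fibres B (\<lambda>y. w (h y))"
  unfolding finite_fibres_def
proof
  fix n
  have "bij_betw h {y\<in>B. w (h y) = n} {x\<in>A. w x = n}"
    using assms(1) unfolding bij_betw_def inj_on_def by (auto simp: image_iff)
  then show "finite {y\<in>B. w (h y) = n}"
    using bij_betw_finite assms(2) finite_fibresD by blast
qed

lemma weighted_fps_mult:
  fixes c d :: "_ \<Rightarrow> 'a::comm_semiring_1"
  assumes "finite_fibres A w" "finite_fibres B v"
  shows "weighted_fps A w c * weighted_fps B v d
           = weighted_fps (A \<times> B) (\<lambda>(x, y). w x + v y) (\<lambda>(x, y). c x * d y)"
proof (rule fps_ext)
  fix n
  define S where "S i = {x\<in>A. w x = i} \<times> {y\<in>B. v y = n - i}" for i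
  have "finite (S i)" for i using assms unfolding S_def by (simp add: finite_fibresD)
  have "(weighted_fps A w c * weighted_fps B v d) $ n
          = (\<Sum>i=0..n. (\<Sum>x\<in>{x\<in>A. w x = i}. c x) * (\<Sum>y\<in>{y\<in>B. v y = n - i}. d y))"
    by (simp add: fps_mult_nth weighted_fps_nth)
  also have "\<dots> = (\<Sum>i=0..n. \<Sum>(x, y)\<in>S i. c x * d y)"
    unfolding S_def sum_product sum.cartesian_product ..
  also have "\<dots> = (\<Sum>(x, y)\<in>(\<Union>i\<in>{0..n}. S i). c x * d y)"
    using \<open>\<And>i. finite (S i)\<close> by (intro sum.UNION_disjoint[symmetric]) (auto simp: S_def)
  also have "(\<Union>i\<in>{0..n}. S i) = {p\<in>A \<times> B. (case p of (x, y) \<Rightarrow> w x + v y) = n}"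
    unfolding S_def by force
  finally show "(weighted_fps A w c * weighted_fps B v d) $ n
      = weighted_fps (A \<times> B) (\<lambda>(x, y). w x + v y) (\<lambda>(x, y). c x * d y) $ n"
    by (simp add: weighted_fps_nth)
qed

lemma weighted_fps_reindex:
  assumes "bij_betw h B A"
  shows "weighted_fps A w c = weighted_fps B (\<lambda>y. w (h y)) (\<lambda>y. c (h y))"
proof (rule fps_ext)
  fix n
  have "bij_betw h {y\<in>B. w (h y) = n} {x\<in>A. w x = n}"
    using assms unfolding bij_betw_def inj_on_def by (auto simp: image_iff)
  then show "weighted_fps A w c $ n = weighted_fps B (\<lambda>y. w (h y)) (\<lambda>y. c (h y)) $ n"
    unfolding weighted_fps_nth by (rule sum.reindex_bij_betw[symmetric])
qed

lemma weighted_fps_cong: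
  assumes "\<And>x. x \<in> A \<Longrightarrow> w x = w' x" "\<And>x. x \<in> A \<Longrightarrow> c x = c' x"
  shows "weighted_fps A w c = weighted_fps A w' c'"
proof (rule fps_ext)
  fix n
  have "{x\<in>A. w x = n} = {x\<in>A. w' x = n}" using assms by auto
  then show "weighted_fps A w c $ n = weighted_fps A w' c' $ n"
    unfolding weighted_fps_nth using assms by (auto intro!: sum.cong)
qed

lemma weighted_fps_Int_Diff:
  assumes "finite_fibres A w"
  shows "weighted_fps A w c = weighted_fps (A \<inter> S) w c + weighted_fps (A - S) w c"
proof (rule fps_ext)
  fix n
  have "{x\<in>A \<inter> S. w x = n} = {x\<in>A. w x = n} \<inter> S" "{x\<in>A - S. w x = n} = {x\<in>A. w x = n} - S"
    by auto
  then show "weighted_fps A w c $ n = (weighted_fps (A \<inter> S) w c + weighted_fps (A - S) w c) $ n"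
    using sum.Int_Diff[OF finite_fibresD[OF assms]] by (simp add: weighted_fps_nth)
qed

lemma fps_X_mult_weighted_fps:
  "fps_X * weighted_fps A w c = weighted_fps A (\<lambda>x. w x + 1) (c :: _ \<Rightarrow> 'a::comm_semiring_1)"
proof (rule fps_ext)
  fix n
  show "(fps_X * weighted_fps A w c) $ n = weighted_fps A (\<lambda>x. w x + 1) c $ n"
    by (cases n) (simp_all add: weighted_fps_nth fps_X_mult_nth)
qed

lemma weighted_fps_uminus:
  "weighted_fps A w (\<lambda>x. - c x) = - weighted_fps A w (c :: _ \<Rightarrow> 'a::ab_group_add)"
  by (rule fps_ext) (simp add: weighted_fps_nth sum_negf)

lemma weighted_fps_eq_0_if_involution:
  fixes c :: "_ \<Rightarrow> 'a::{idom, ring_char_0}"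
  assumes \<sigma>_A: "\<And>x. x \<in> A \<Longrightarrow> \<sigma> x \<in> A" and \<sigma>_\<sigma>: "\<And>x. x \<in> A \<Longrightarrow> \<sigma> (\<sigma> x) = x"
    and w_\<sigma>: "\<And>x. x \<in> A \<Longrightarrow> w (\<sigma> x) = w x" and c_\<sigma>: "\<And>x. x \<in> A \<Longrightarrow> c (\<sigma> x) = - c x"
  shows "weighted_fps A w c = 0"
proof (rule fps_ext)
  fix n
  define F where "F = {x\<in>A. w x = n}"
  have "bij_betw \<sigma> F F"
    unfolding F_def by (rule bij_betw_byWitness[where f' = \<sigma>]) (auto simp: \<sigma>_A \<sigma>_\<sigma> w_\<sigma>)
  then have "(\<Sum>x\<in>F. c x) = (\<Sum>x\<in>F. c (\<sigma> x))"
    by (rule sum.reindex_bij_betw[symmetric])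
  also have "\<dots> = - (\<Sum>x\<in>F. c x)"
    by (simp add: sum_negf F_def c_\<sigma>)
  finally have "2 * (\<Sum>x\<in>F. c x) = 0" by (simp only: eq_neg_iff_add_eq_0 mult_2)
  then show "weighted_fps A w c $ n = 0 $ n" by (simp add: weighted_fps_nth F_def)
qed

definition fps_dilate :: "nat \<Rightarrow> 'a::zero fps \<Rightarrow> 'a fps" where
  "fps_dilate k F = Abs_fps (\<lambda>n. if k dvd n then F $ (n div k) else 0)"

lemma fps_dilate_nth: "fps_dilate k F $ n = (if k dvd n then F $ (n div k) else 0)"
  unfolding fps_dilate_def by simp

lemma fps_dilate_1: "fps_dilate k 1 = 1"
  by (rule fps_ext) (auto simp: fps_dilate_nth)

lemma weighted_fps_mult_weight:
  assumes "k > 0"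
  shows "weighted_fps A (\<lambda>x. k * w x) c = fps_dilate k (weighted_fps A w c)"
proof (rule fps_ext)
  fix n
  have "{x\<in>A. k * w x = n} = (if k dvd n then {x\<in>A. w x = n div k} else {})"
    using assms by auto
  then show "weighted_fps A (\<lambda>x. k * w x) c $ n = fps_dilate k (weighted_fps A w c) $ n"
    by (simp add: weighted_fps_nth fps_dilate_nth)
qed

lemma weighted_fps_fps_nth: "weighted_fps UNIV (\<lambda>n. n) (fps_nth F) = F"
  by (rule fps_ext) (simp add: weighted_fps_nth)

lemma fps_dilate_weighted_fps_mult:
  fixes c d :: "_ \<Rightarrow> 'a::comm_semiring_1"
  assumes "finite_fibres A w" "finite_fibres B v" "k > 0"
  shows "fps_dilate k (weighted_fps A w c * weighted_fps B v d)
           = weighted_fps (A \<times> B) (\<lambda>(x, y). k * w x + k * v y) (\<lambda>(x, y). c x * d y)"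
proof -
  have "fps_dilate k (weighted_fps A w c * weighted_fps B v d)
      = weighted_fps (A \<times> B) (\<lambda>p. k * (case p of (x, y) \<Rightarrow> w x + v y)) (\<lambda>(x, y). c x * d y)"
    using assms by (simp add: weighted_fps_mult weighted_fps_mult_weight)
  also have "\<dots> = weighted_fps (A \<times> B) (\<lambda>(x, y). k * w x + k * v y) (\<lambda>(x, y). c x * d y)"
    by (rule weighted_fps_cong) (auto simp: algebra_simps)
  finally show ?thesis .
qed

lemma fps_dilate_mult:
  fixes F G :: "'a::comm_semiring_1 fps"
  assumes "k > 0"
  shows "fps_dilate k (F * G) = fps_dilate k F * fps_dilate k G"
proof -
  have fib: "finite_fibres UNIV (\<lambda>n::nat. n)" by (simp add: finite_fibres_def)
  have "fps_dilate k (F * G) = fps_dilate k (weighted_fps UNIV (\<lambda>n. n) (fps_nth F)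
                                  * weighted_fps UNIV (\<lambda>n. n) (fps_nth G))"
    by (simp add: weighted_fps_fps_nth)
  also have "\<dots> = weighted_fps (UNIV \<times> UNIV) (\<lambda>(i, j). k * i + k * j) (\<lambda>(i, j). F $ i * G $ j)"
    by (rule fps_dilate_weighted_fps_mult[OF fib fib assms])
  also have "\<dots> = weighted_fps UNIV (\<lambda>i. k * i) (fps_nth F) * weighted_fps UNIV (\<lambda>j. k * j) (fps_nth G)"
    by (rule weighted_fps_mult[OF finite_fibres_mult_weight[OF fib assms]
          finite_fibres_mult_weight[OF fib assms], symmetric])
  also have "\<dots> = fps_dilate k F * fps_dilate k G"
    using assms by (simp add: weighted_fps_mult_weight weighted_fps_fps_nth)
  finally show ?thesis .
qed

section \<open>The pentagonal series and Borwein's theta series\<close>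

definition pentagonal_fps :: "'a::comm_ring_1 fps" where
  "pentagonal_fps = weighted_fps UNIV pentagonal neg_one_pow"

lemma pentagonal_fps_nth: "pentagonal_fps $ n = (\<Sum>j | pentagonal j = n. neg_one_pow j)"
  unfolding pentagonal_fps_def weighted_fps_nth by simp

lemma pentagonal_fps_nth_0: "pentagonal_fps $ 0 = 1"
proof -
  have "{j. pentagonal j = 0} = {0}" by (auto simp: pentagonal_eq_0_iff)
  then show ?thesis unfolding pentagonal_fps_nth by (simp add: neg_one_pow_def)
qed

definition eisenstein_form :: "int \<times> int \<Rightarrow> nat" where
  "eisenstein_form = (\<lambda>(u, v). nat (u\<^sup>2 + u * v + v\<^sup>2))"

definition eisenstein_form_shifted :: "int \<times> int \<Rightarrow> nat" where
  "eisenstein_form_shifted = (\<lambda>(u, v). nat (u\<^sup>2 + u * v + v\<^sup>2 + u + v))"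

text \<open>Borwein's cubic theta functions a(q) and q^(-1/3) c(q).\<close>

definition borwein_a_fps :: "'a::comm_ring_1 fps" where
  "borwein_a_fps = weighted_fps UNIV eisenstein_form (\<lambda>_. 1)"

definition borwein_c_fps :: "'a::comm_ring_1 fps" where
  "borwein_c_fps = weighted_fps UNIV eisenstein_form_shifted (\<lambda>_. 1)"

lemma eisenstein_form_eq: "2 * (u\<^sup>2 + u * v + v\<^sup>2) = (u + v)\<^sup>2 + u\<^sup>2 + (v\<^sup>2 :: int)"
  by (simp add: power2_eq_square algebra_simps)

lemma eisenstein_form_shifted_eq:
  "2 * (u\<^sup>2 + u * v + v\<^sup>2 + u + v) + 1 = (u + v + 1)\<^sup>2 + u\<^sup>2 + (v\<^sup>2 :: int)"
  by (simp add: power2_eq_square algebra_simps)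

lemma of_nat_eisenstein_form: "int (eisenstein_form (u, v)) = u\<^sup>2 + u * v + v\<^sup>2"
proof -
  have "0 \<le> 2 * (u\<^sup>2 + u * v + v\<^sup>2)" unfolding eisenstein_form_eq by simp
  then show ?thesis by (simp add: eisenstein_form_def)
qed

lemma of_nat_eisenstein_form_shifted:
  "int (eisenstein_form_shifted (u, v)) = u\<^sup>2 + u * v + v\<^sup>2 + u + v"
proof -
  have "0 \<le> 2 * (u\<^sup>2 + u * v + v\<^sup>2 + u + v) + 1" unfolding eisenstein_form_shifted_eq by simp
  then show ?thesis by (simp add: eisenstein_form_shifted_def)
qed

lemma abs_le_power2_int: "\<bar>x :: int\<bar> \<le> x\<^sup>2"
proof (cases "x = 0")
  case False
  then have "\<bar>x\<bar> * 1 \<le> \<bar>x\<bar> * \<bar>x\<bar>" by (intro mult_left_mono) auto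
  then show ?thesis by (simp add: power2_eq_square abs_mult_self_eq)
qed simp

lemma finite_fibres_pentagonal: "finite_fibres UNIV pentagonal"
proof (rule finite_fibres_bounded[where B = "\<lambda>n. {- int n..int n}"])
  show "j \<in> {- int (pentagonal j)..int (pentagonal j)}" for j
    using abs_le_pentagonal[of j] by auto
qed simp

lemma finite_fibres_quadratic:
  fixes Q :: "int \<times> int \<Rightarrow> nat"
  assumes "\<And>u v. u\<^sup>2 + v\<^sup>2 \<le> 2 * int (Q (u, v)) + 1"
  shows "finite_fibres UNIV Q"
proof (rule finite_fibres_bounded[where B = "\<lambda>n. {- 2 * int n - 1..2 * int n + 1} \<times> {- 2 * int n - 1..2 * int n + 1}"])
  fix p :: "int \<times> int"
  obtain u v where p: "p = (u, v)" by (cases p)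
  have "\<bar>u\<bar> \<le> 2 * int (Q p) + 1" "\<bar>v\<bar> \<le> 2 * int (Q p) + 1"
    using assms[of u v] abs_le_power2_int[of u] abs_le_power2_int[of v] zero_le_power2[of u]
      zero_le_power2[of v] unfolding p by linarith+
  then show "p \<in> {- 2 * int (Q p) - 1..2 * int (Q p) + 1} \<times> {- 2 * int (Q p) - 1..2 * int (Q p) + 1}"
    unfolding p by (auto simp: abs_le_iff)
qed simp

lemma finite_fibres_eisenstein_form: "finite_fibres UNIV eisenstein_form"
proof (rule finite_fibres_quadratic)
  show "u\<^sup>2 + v\<^sup>2 \<le> 2 * int (eisenstein_form (u, v)) + 1" for u v
    unfolding of_nat_eisenstein_form eisenstein_form_eq using zero_le_power2[of "u + v"] by linarith
qed

lemma finite_fibres_eisenstein_form_shifted: "finite_fibres UNIV eisenstein_form_shifted"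
proof (rule finite_fibres_quadratic)
  show "u\<^sup>2 + v\<^sup>2 \<le> 2 * int (eisenstein_form_shifted (u, v)) + 1" for u v
    unfolding of_nat_eisenstein_form_shifted eisenstein_form_shifted_eq
    using zero_le_power2[of "u + v + 1"] by linarith
qed

section \<open>Dissection of the cube of the pentagonal series\<close>

definition pentagonal3 :: "int \<times> int \<times> int \<Rightarrow> nat" where
  "pentagonal3 = (\<lambda>(a, b, c). pentagonal a + pentagonal b + pentagonal c)"

lemma finite_fibres_pentagonal3: "finite_fibres UNIV pentagonal3"
proof -
  have "finite_fibres (UNIV \<times> UNIV \<times> UNIV)
          (\<lambda>(a, bc). pentagonal a + (case bc of (b, c) \<Rightarrow> pentagonal b + pentagonal c))"
    by (intro finite_fibres_Times finite_fibres_pentagonal)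
  moreover have "(\<lambda>(a, bc). pentagonal a + (case bc of (b, c) \<Rightarrow> pentagonal b + pentagonal c)) = pentagonal3"
    by (auto simp: pentagonal3_def fun_eq_iff)
  ultimately show ?thesis by simp
qed

lemma pentagonal_fps_cube:
  "pentagonal_fps ^ 3 = weighted_fps UNIV pentagonal3 (\<lambda>(a, b, c). neg_one_pow (a + b + c))"
proof -
  note fib = finite_fibres_pentagonal
  have fib2: "finite_fibres (UNIV \<times> UNIV) (\<lambda>(b, c). pentagonal b + pentagonal c)"
    by (rule finite_fibres_Times[OF fib fib])
  have "pentagonal_fps ^ 3 = weighted_fps UNIV pentagonal neg_one_pow
          * (weighted_fps UNIV pentagonal neg_one_pow * weighted_fps UNIV pentagonal neg_one_pow)"
    by (simp add: pentagonal_fps_def power3_eq_cube mult.assoc)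
  also have "\<dots> = weighted_fps (UNIV \<times> UNIV \<times> UNIV)
      (\<lambda>(a, bc). pentagonal a + (case bc of (b, c) \<Rightarrow> pentagonal b + pentagonal c))
      (\<lambda>(a, bc). neg_one_pow a * (case bc of (b, c) \<Rightarrow> neg_one_pow b * neg_one_pow c))"
    unfolding weighted_fps_mult[OF fib fib] weighted_fps_mult[OF fib fib2] ..
  also have "\<dots> = weighted_fps UNIV pentagonal3 (\<lambda>(a, b, c). neg_one_pow (a + b + c))"
    unfolding UNIV_Times_UNIV by (rule weighted_fps_cong) (auto simp: pentagonal3_def neg_one_pow_add)
  finally show ?thesis .
qed

lemma bij_betw_residue_class_param:
  fixes r :: int
  shows "bij_betw (\<lambda>(s, u, v). (s + u, s + v, s + r - u - v)) UNIV {(a, b, c). (a + b + c) mod 3 = r mod 3}"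
proof -
  define f :: "int \<times> int \<times> int \<Rightarrow> int \<times> int \<times> int" where "f = (\<lambda>(s, u, v). (s + u, s + v, s + r - u - v))"
  define g :: "int \<times> int \<times> int \<Rightarrow> int \<times> int \<times> int"
    where "g = (\<lambda>(a, b, c). let s = (a + b + c - r) div 3 in (s, a - s, b - s))"
  have "bij_betw f UNIV {(a, b, c). (a + b + c) mod 3 = r mod 3}"
  proof (rule bij_betw_byWitness[where f' = g])
    show "\<forall>y\<in>{(a, b, c). (a + b + c) mod 3 = r mod 3}. f (g y) = y"
    proof
      fix y assume "y \<in> {(a, b, c). (a + b + c) mod 3 = r mod 3}"
      then obtain a b c where y: "y = (a, b, c)" and "(a + b + c) mod 3 = r mod 3" by auto
      then have "3 * ((a + b + c - r) div 3) = a + b + c - r" by (simp add: mod_eq_dvd_iff)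
      then show "f (g y) = y" unfolding y f_def g_def by (simp add: Let_def)
    qed
  qed (auto simp: f_def g_def Let_def)
  then show ?thesis unfolding f_def .
qed

lemma pentagonal3_class_0:
  "pentagonal3 (s + u, s + v, s - u - v) = 3 * pentagonal s + 3 * eisenstein_form (u, v)"
proof -
  have "int (pentagonal3 (s + u, s + v, s - u - v)) = int (3 * pentagonal s + 3 * eisenstein_form (u, v))"
    using two_pentagonal[of "s + u"] two_pentagonal[of "s + v"] two_pentagonal[of "s - u - v"]
      two_pentagonal[of s] of_nat_eisenstein_form[of u v]
    by (simp add: pentagonal3_def algebra_simps power2_eq_square)
  then show ?thesis by (simp only: of_nat_eq_iff)
qed

lemma two_pentagonal3_class_1:
  "2 * int (pentagonal3 (s + u, s + v, s + 1 - u - v))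
     = 9 * s * s + 9 * s + 4 + 6 * (u * u + u * v + v * v - u - v)"
  using two_pentagonal[of "s + u"] two_pentagonal[of "s + v"] two_pentagonal[of "s + 1 - u - v"]
  by (simp add: pentagonal3_def algebra_simps)

lemma pentagonal3_class_2:
  "pentagonal3 (s + u, s + v, s - 1 - u - v)
     = 3 * pentagonal (- s) + 3 * eisenstein_form_shifted (u, v) + 1"
proof -
  have "int (pentagonal3 (s + u, s + v, s - 1 - u - v))
      = int (3 * pentagonal (- s) + 3 * eisenstein_form_shifted (u, v) + 1)"
    using two_pentagonal[of "s + u"] two_pentagonal[of "s + v"] two_pentagonal[of "s - 1 - u - v"]
      two_pentagonal[of "- s"] of_nat_eisenstein_form_shifted[of u v]
    by (simp add: pentagonal3_def algebra_simps power2_eq_square)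
  then show ?thesis by (simp only: of_nat_eq_iff)
qed

lemma weighted_fps_residue_class:
  fixes r :: int
  shows "weighted_fps {(a, b, c). (a + b + c) mod 3 = r mod 3} pentagonal3 (\<lambda>(a, b, c). neg_one_pow (a + b + c))
     = weighted_fps UNIV (\<lambda>(s, u, v). pentagonal3 (s + u, s + v, s + r - u - v))
         (\<lambda>(s, u, v). neg_one_pow (3 * s + r))"
  unfolding weighted_fps_reindex[OF bij_betw_residue_class_param[of r]]
  by (rule weighted_fps_cong) (auto simp: algebra_simps)

lemma weighted_fps_residue_class_0:
  "weighted_fps {(a, b, c). (a + b + c) mod 3 = 0} pentagonal3 (\<lambda>(a, b, c). neg_one_pow (a + b + c))
     = fps_dilate 3 (pentagonal_fps * borwein_a_fps)"
proof -
  have "weighted_fps {(a, b, c). (a + b + c) mod 3 = 0} pentagonal3 (\<lambda>(a, b, c). neg_one_pow (a + b + c))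
      = weighted_fps UNIV (\<lambda>(s, u, v). pentagonal3 (s + u, s + v, s + 0 - u - v))
          (\<lambda>(s, u, v). neg_one_pow (3 * s + 0))"
    using weighted_fps_residue_class[of 0] by simp
  also have "\<dots> = weighted_fps (UNIV \<times> UNIV) (\<lambda>(s, p). 3 * pentagonal s + 3 * eisenstein_form p)
      (\<lambda>(s, p). neg_one_pow s * 1)"
    unfolding UNIV_Times_UNIV
    by (rule weighted_fps_cong) (auto simp: pentagonal3_class_0 neg_one_pow_mult_3)
  also have "\<dots> = fps_dilate 3 (pentagonal_fps * borwein_a_fps)"
    unfolding pentagonal_fps_def borwein_a_fps_def
    by (rule fps_dilate_weighted_fps_mult[OF finite_fibres_pentagonal finite_fibres_eisenstein_form, symmetric]) simp
  finally show ?thesis .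
qed

lemma weighted_fps_residue_class_1:
  "weighted_fps {(a, b, c). (a + b + c) mod 3 = 1} pentagonal3 (\<lambda>(a, b, c). neg_one_pow (a + b + c))
     = (0 :: 'a::{idom, ring_char_0} fps)"
proof -
  have "weighted_fps {(a, b, c). (a + b + c) mod 3 = 1} pentagonal3 (\<lambda>(a, b, c). neg_one_pow (a + b + c))
      = weighted_fps UNIV (\<lambda>(s, u, v). pentagonal3 (s + u, s + v, s + 1 - u - v))
          (\<lambda>(s, u, v). neg_one_pow (3 * s + 1) :: 'a)"
    using weighted_fps_residue_class[of 1] by simp
  also have "\<dots> = 0"
  proof -
    have weight: "pentagonal3 (- 1 - s + u, - 1 - s + v, - 1 - s + 1 - u - v)
        = pentagonal3 (s + u, s + v, s + 1 - u - v)" for s u v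
    proof -
      have "2 * int (pentagonal3 (- 1 - s + u, - 1 - s + v, - 1 - s + 1 - u - v))
          = 2 * int (pentagonal3 (s + u, s + v, s + 1 - u - v))"
        unfolding two_pentagonal3_class_1 by (simp add: algebra_simps)
      then show ?thesis by simp
    qed
    have sign: "neg_one_pow (3 * (- 1 - s) + 1) = - (neg_one_pow (3 * s + 1) :: 'a)" for s
    proof -
      have "even (3 * (- 1 - s) + 1) \<longleftrightarrow> \<not> even (3 * s + 1)" by presburger
      then show ?thesis unfolding neg_one_pow_def by simp
    qed
    show ?thesis
      by (rule weighted_fps_eq_0_if_involution[where \<sigma> = "\<lambda>(s, u, v). (- 1 - s, u, v)"])
        (auto simp only: weight sign split: prod.splits)
  qed
  finally show ?thesis .
qed

lemma weighted_fps_residue_class_2: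
  "weighted_fps {(a, b, c). (a + b + c) mod 3 = 2} pentagonal3 (\<lambda>(a, b, c). neg_one_pow (a + b + c))
     = - (fps_X * fps_dilate 3 (pentagonal_fps * borwein_c_fps))"
proof -
  have bij: "bij_betw uminus (UNIV :: int set) UNIV" by (rule bij_uminus)
  have "weighted_fps {(a, b, c). (a + b + c) mod 3 = 2} pentagonal3 (\<lambda>(a, b, c). neg_one_pow (a + b + c))
      = weighted_fps UNIV (\<lambda>(s, u, v). pentagonal3 (s + u, s + v, s + - 1 - u - v))
          (\<lambda>(s, u, v). neg_one_pow (3 * s + - 1))"
    using weighted_fps_residue_class[of "- 1"] by simp
  also have "\<dots> = weighted_fps (UNIV \<times> UNIV)
      (\<lambda>(s, p). 3 * pentagonal (- s) + 3 * eisenstein_form_shifted p + 1) (\<lambda>(s, p). - (neg_one_pow (- s) * 1))"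
    unfolding UNIV_Times_UNIV
    by (rule weighted_fps_cong)
      (auto simp: pentagonal3_class_2 neg_one_pow_mult_3 neg_one_pow_diff_1 neg_one_pow_uminus)
  also have "\<dots> = - (fps_X * weighted_fps (UNIV \<times> UNIV)
      (\<lambda>(s, p). 3 * pentagonal (- s) + 3 * eisenstein_form_shifted p) (\<lambda>(s, p). neg_one_pow (- s) * 1))"
    unfolding fps_X_mult_weighted_fps weighted_fps_uminus[symmetric]
    by (rule weighted_fps_cong) auto
  also have "\<dots> = - (fps_X * fps_dilate 3 (weighted_fps UNIV (\<lambda>s. pentagonal (- s)) (\<lambda>s. neg_one_pow (- s))
      * borwein_c_fps))"
    unfolding borwein_c_fps_def
      fps_dilate_weighted_fps_mult[OF finite_fibres_reindex[OF bij finite_fibres_pentagonal]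
        finite_fibres_eisenstein_form_shifted zero_less_numeral]
    by simp
  also have "weighted_fps UNIV (\<lambda>s. pentagonal (- s)) (\<lambda>s. neg_one_pow (- s)) = pentagonal_fps"
    unfolding pentagonal_fps_def by (rule weighted_fps_reindex[OF bij, symmetric])
  finally show ?thesis .
qed

lemma pentagonal_fps_cube_dissection:
  "(pentagonal_fps :: 'a::{idom, ring_char_0} fps) ^ 3
     = fps_dilate 3 pentagonal_fps * (fps_dilate 3 borwein_a_fps - fps_X * fps_dilate 3 borwein_c_fps)"
proof -
  define R where "R i = {(a, b, c). (a + b + c) mod 3 = (i :: int)}" for i
  define S :: "int \<times> int \<times> int \<Rightarrow> 'a" where "S = (\<lambda>(a, b, c). neg_one_pow (a + b + c))"
  have "UNIV \<inter> R 0 = R 0" "(UNIV - R 0) \<inter> R 1 = R 1" "(UNIV - R 0) - R 1 = R 2"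
    unfolding R_def by auto
  then have "weighted_fps UNIV pentagonal3 S
      = weighted_fps (R 0) pentagonal3 S + (weighted_fps (R 1) pentagonal3 S + weighted_fps (R 2) pentagonal3 S)"
    using weighted_fps_Int_Diff[OF finite_fibres_pentagonal3, of S "R 0"]
      weighted_fps_Int_Diff[OF finite_fibres_subset[OF finite_fibres_pentagonal3], of "UNIV - R 0" S "R 1"]
    by simp
  also have "\<dots> = fps_dilate 3 (pentagonal_fps * borwein_a_fps)
      + (0 + - (fps_X * fps_dilate 3 (pentagonal_fps * borwein_c_fps)))"
    unfolding R_def S_def weighted_fps_residue_class_0 weighted_fps_residue_class_1
      weighted_fps_residue_class_2 ..
  finally show ?thesis
    unfolding pentagonal_fps_cube S_def by (simp add: fps_dilate_mult algebra_simps)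
qed

section \<open>Positivity of the reciprocal of the pentagonal series\<close>

definition partial_euler_fps :: "nat \<Rightarrow> 'a::comm_ring_1 fps" where
  "partial_euler_fps m = (\<Prod>i\<in>{1..m}. 1 - fps_X ^ i)"

lemma shanks_sum_fps_X_nth:
  assumes "n \<le> m"
  shows "shanks_sum m fps_X $ n = partial_euler_fps m $ n"
proof -
  define t :: "nat \<Rightarrow> 'a fps"
    where "t k = fps_X ^ (m * k + triangular k) * ((- 1) ^ k * (\<Prod>i\<in>{k + 1..m}. 1 - fps_X ^ i))" for k
  have "t k $ n = 0" if "k \<in> {..m} - {0}" for k
  proof -
    have "m \<le> m * k" "1 \<le> triangular k" using that triangular_ge_1[of k] by auto
    then have "n < m * k + triangular k" using assms by linarith
    then show ?thesis unfolding t_def by (simp add: fps_X_power_mult_nth)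
  qed
  then have "(\<Sum>k\<le>m. t k $ n) = t 0 $ n"
    by (subst sum.remove[of _ 0]) (auto intro: sum.neutral)
  moreover have "shanks_sum m fps_X = (\<Sum>k\<le>m. t k)"
    unfolding shanks_sum_def t_def by (simp add: algebra_simps)
  moreover have "t 0 = partial_euler_fps m"
    unfolding t_def partial_euler_fps_def by (simp add: triangular_def)
  ultimately show ?thesis by (simp add: fps_sum_nth)
qed

lemma pentagonal_sum_fps_X_nth:
  assumes "n \<le> m"
  shows "pentagonal_sum m fps_X $ n = pentagonal_fps $ n"
proof -
  have "pentagonal j = n \<Longrightarrow> j \<in> {- int m..int m}" for j
    using abs_le_pentagonal[of j] assms by auto
  then have "{j\<in>{- int m..int m}. pentagonal j = n} = {j. pentagonal j = n}" by blast
  moreover have "pentagonal_sum m fps_X $ n = (\<Sum>j\<in>{- int m..int m}. if pentagonal j = n then neg_one_pow j else 0)"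
    unfolding pentagonal_sum_def fps_sum_nth by (auto intro!: sum.cong simp: neg_one_pow_def)
  ultimately show ?thesis
    unfolding pentagonal_fps_nth by (simp add: sum.inter_filter[symmetric])
qed

lemma partial_euler_fps_nth:
  "n \<le> m \<Longrightarrow> partial_euler_fps m $ n = pentagonal_fps $ n"
  using shanks_sum_fps_X_nth pentagonal_sum_fps_X_nth shanks_identity by metis

definition geometric_fps :: "nat \<Rightarrow> 'a::comm_ring_1 fps" where
  "geometric_fps k = Abs_fps (\<lambda>n. if k dvd n then 1 else 0)"

lemma one_minus_fps_X_power_mult_geometric_fps:
  assumes "k \<ge> 1"
  shows "(1 - fps_X ^ k) * geometric_fps k = 1"
proof (rule fps_ext)
  fix n
  have "((1 - fps_X ^ k) * geometric_fps k) $ n = geometric_fps k $ n - (fps_X ^ k * geometric_fps k) $ n"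
    by (simp add: algebra_simps)
  also have "\<dots> = 1 $ n"
  proof (cases "n < k")
    case True
    then have "k dvd n \<longleftrightarrow> n = 0" using assms by (auto dest: dvd_imp_le)
    then show ?thesis using True by (simp add: geometric_fps_def fps_X_power_mult_nth)
  next
    case False
    then have "k dvd (n - k) \<longleftrightarrow> k dvd n" by (simp add: dvd_minus_self)
    then show ?thesis using False assms by (simp add: geometric_fps_def fps_X_power_mult_nth)
  qed
  finally show "((1 - fps_X ^ k) * geometric_fps k) $ n = 1 $ n" .
qed

lemma partial_euler_fps_mult_prod_geometric_fps:
  "partial_euler_fps m * (\<Prod>i\<in>{1..m}. geometric_fps i) = 1"
  unfolding partial_euler_fps_def prod.distrib[symmetric]
  by (rule prod.neutral) (auto intro: one_minus_fps_X_power_mult_geometric_fps)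

lemma fps_right_inverse_nth_eq:
  fixes F F' G G' :: "'a::comm_ring_1 fps"
  assumes "F * F' = 1" "G * G' = 1" and "\<And>k. k \<le> m \<Longrightarrow> F $ k = G $ k" and "n \<le> m"
  shows "F' $ n = G' $ n"
proof -
  have "F' - G' = (F' * G') * (G - F)"
    using assms(1,2) by (simp add: algebra_simps) (metis mult.assoc mult.commute mult_1_right)
  moreover have "((F' * G') * (G - F)) $ n = 0"
    unfolding fps_mult_nth using assms(3,4) by (intro sum.neutral) auto
  ultimately have "(F' - G') $ n = 0" by simp
  then show ?thesis by simp
qed

lemma fps_mult_nth_pos_nat:
  fixes F G :: "'a::{comm_semiring_1, semiring_char_0} fps"
  assumes F: "\<And>n. \<exists>N. F $ n = of_nat N" and F0: "F $ 0 \<noteq> 0"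
    and G: "\<And>n. \<exists>N\<ge>1. G $ n = of_nat N"
  shows "\<exists>N\<ge>1. (F * G) $ n = of_nat N"
proof -
  obtain f where f: "\<And>n. F $ n = of_nat (f n)" using F by metis
  obtain g where g: "\<And>n. G $ n = of_nat (g n)" "\<And>n. g n \<ge> 1" using G by metis
  have "1 \<le> f 0 * g (n - 0)" using F0 g(2)[of n] by (simp add: f)
  also have "\<dots> \<le> (\<Sum>i=0..n. f i * g (n - i))"
    by (rule member_le_sum) auto
  finally show ?thesis by (auto simp: fps_mult_nth f g)
qed

lemma prod_geometric_fps_nth_pos:
  assumes "m \<ge> 1"
  shows "\<exists>N\<ge>1. ((\<Prod>i\<in>{1..m}. geometric_fps i) :: 'a::{comm_ring_1, semiring_char_0} fps) $ n = of_nat N"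
  using assms
proof (induction m arbitrary: n rule: dec_induct)
  case base
  show ?case by (simp add: geometric_fps_def)
next
  case (step m)
  have "\<exists>N. (geometric_fps (Suc m) :: 'a fps) $ k = of_nat N" for k
    by (auto simp: geometric_fps_def intro: exI[of _ 0] exI[of _ 1])
  then have "\<exists>N\<ge>1. (geometric_fps (Suc m) * (\<Prod>i\<in>{1..m}. geometric_fps i) :: 'a fps) $ n = of_nat N"
    using step.IH by (intro fps_mult_nth_pos_nat) (auto simp: geometric_fps_def)
  then show ?case by (simp add: prod.cl_ivl_Suc mult.commute)
qed

lemma inverse_pentagonal_fps_nth_pos:
  "\<exists>N\<ge>1. (inverse pentagonal_fps :: 'a::field_char_0 fps) $ n = of_nat N"
proof -
  have "pentagonal_fps * inverse pentagonal_fps = (1 :: 'a fps)"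
    by (rule inverse_mult_eq_1') (simp add: pentagonal_fps_nth_0)
  then have "(\<Prod>i\<in>{1..Suc n}. geometric_fps i) $ n = (inverse pentagonal_fps :: 'a fps) $ n"
    by (intro fps_right_inverse_nth_eq[OF partial_euler_fps_mult_prod_geometric_fps _ partial_euler_fps_nth])
      auto
  then show ?thesis using prod_geometric_fps_nth_pos[of "Suc n" n, where 'a = 'a] by simp
qed

lemma weighted_fps_mult_inverse_pentagonal_fps_nth_pos:
  fixes Q :: "'x \<Rightarrow> nat"
  assumes "finite_fibres UNIV Q" and "Q x0 = 0"
  shows "\<exists>N\<ge>1. (weighted_fps UNIV Q (\<lambda>_. 1) * inverse pentagonal_fps :: 'a::field_char_0 fps) $ n = of_nat N"
proof (rule fps_mult_nth_pos_nat[OF _ _ inverse_pentagonal_fps_nth_pos])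
  show "\<exists>N. weighted_fps UNIV Q (\<lambda>_. 1 :: 'a) $ k = of_nat N" for k
    by (simp add: weighted_fps_nth)
  have "card {x. Q x = 0} \<noteq> 0"
    using assms finite_fibresD[of UNIV Q 0] by (auto simp: card_eq_0_iff)
  then show "weighted_fps UNIV Q (\<lambda>_. 1 :: 'a) $ 0 \<noteq> 0"
    by (simp add: weighted_fps_nth)
qed

lemma borwein_a_fps_mult_inverse_pentagonal_fps_nth_pos:
  "\<exists>N\<ge>1. (borwein_a_fps * inverse pentagonal_fps :: 'a::field_char_0 fps) $ n = of_nat N"
  unfolding borwein_a_fps_def
  by (rule weighted_fps_mult_inverse_pentagonal_fps_nth_pos[OF finite_fibres_eisenstein_form, of "(0, 0)"])
    (simp add: eisenstein_form_def)

lemma borwein_c_fps_mult_inverse_pentagonal_fps_nth_pos: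
  "\<exists>N\<ge>1. (borwein_c_fps * inverse pentagonal_fps :: 'a::field_char_0 fps) $ n = of_nat N"
  unfolding borwein_c_fps_def
  by (rule weighted_fps_mult_inverse_pentagonal_fps_nth_pos[OF finite_fibres_eisenstein_form_shifted, of "(0, 0)"])
    (simp add: eisenstein_form_shifted_def)

section \<open>The analytic pentagonal theorem\<close>

lemma fps_conv_radius_ge_1_if_nth_bounded:
  fixes F :: "'a::{banach, real_normed_div_algebra} fps"
  assumes "\<And>n. norm (F $ n) \<le> C"
  shows "fps_conv_radius F \<ge> 1"
  unfolding fps_conv_radius_def
proof (rule conv_radius_geI_ex')
  fix r :: real assume r: "0 < r" "ereal r < 1"
  show "summable (\<lambda>n. F $ n * of_real r ^ n)"
  proof (rule summable_norm_cancel, rule summable_comparison_test'[where g = "\<lambda>n. C * r ^ n" and N = 0])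
    show "summable (\<lambda>n. C * r ^ n)" using r by (simp add: summable_geometric)
    show "norm (norm (F $ n * of_real r ^ n)) \<le> C * r ^ n" for n
      using mult_right_mono[OF assms[of n], of "r ^ n"] r by (simp add: norm_mult norm_power)
  qed
qed

lemma fps_conv_radius_ge_1_if_sums:
  fixes F :: "'a::{banach, real_normed_field} fps"
  assumes "\<And>q. norm q < 1 \<Longrightarrow> (\<lambda>n. F $ n * q ^ n) sums f q"
  shows "fps_conv_radius F \<ge> 1"
  unfolding fps_conv_radius_def
proof (rule conv_radius_geI_ex')
  fix r :: real assume "0 < r" "ereal r < 1"
  then show "summable (\<lambda>n. F $ n * of_real r ^ n)" using assms[of "of_real r"] sums_summable by force
qed

lemma ereal_norm_less_fps_conv_radius:
  "fps_conv_radius F \<ge> 1 \<Longrightarrow> norm z < 1 \<Longrightarrow> ereal (norm z) < fps_conv_radius F"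
  by (rule less_le_trans[of _ 1]) simp_all

lemma eval_fps_fps_dilate:
  fixes F :: "'a::{banach, real_normed_div_algebra} fps"
  assumes "k > 0" and "ereal (norm (z ^ k)) < fps_conv_radius F"
  shows "eval_fps (fps_dilate k F) z = eval_fps F (z ^ k)"
proof -
  have "(\<lambda>n. F $ n * (z ^ k) ^ n) sums eval_fps F (z ^ k)"
    by (rule sums_eval_fps[OF assms(2)])
  moreover have "(\<lambda>n. F $ n * (z ^ k) ^ n) = (\<lambda>n. (\<lambda>i. fps_dilate k F $ i * z ^ i) (k * n))"
    using assms(1) by (simp add: fps_dilate_nth power_mult)
  ultimately have "(\<lambda>n. (\<lambda>i. fps_dilate k F $ i * z ^ i) (k * n)) sums eval_fps F (z ^ k)" by simp
  then have "(\<lambda>i. fps_dilate k F $ i * z ^ i) sums eval_fps F (z ^ k)"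
  proof (subst (asm) sums_mono_reindex)
    show "strict_mono (\<lambda>n. k * n)" using assms(1) by (simp add: strict_mono_def)
    show "fps_dilate k F $ i * z ^ i = 0" if "i \<notin> range (\<lambda>n. k * n)" for i
      using that by (auto simp: fps_dilate_nth)
  qed
  then show ?thesis unfolding eval_fps_def by (rule sums_unique[symmetric])
qed

lemma norm_pentagonal_fps_nth_le: "norm (pentagonal_fps $ n :: complex) \<le> 1"
proof -
  define S where "S = {j. pentagonal j = n}"
  have "finite S" unfolding S_def using finite_fibresD[OF finite_fibres_pentagonal] by simp
  then have "card S \<le> 1"
    using card_le_Suc0_iff_eq[of S] inj_pentagonal unfolding S_def by (auto dest: injD)
  have "norm (pentagonal_fps $ n :: complex) \<le> (\<Sum>j\<in>S. norm (neg_one_pow j :: complex))"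
    unfolding pentagonal_fps_nth S_def by (rule norm_sum)
  also have "\<dots> \<le> 1" using \<open>card S \<le> 1\<close> by simp
  finally show ?thesis .
qed

lemma fps_conv_radius_pentagonal_fps: "fps_conv_radius (pentagonal_fps :: complex fps) \<ge> 1"
  using norm_pentagonal_fps_nth_le by (rule fps_conv_radius_ge_1_if_nth_bounded)

lemma fps_conv_radius_fps_dilate_pentagonal_fps:
  "fps_conv_radius (fps_dilate k pentagonal_fps :: complex fps) \<ge> 1"
  by (rule fps_conv_radius_ge_1_if_nth_bounded[of _ 1]) (simp add: fps_dilate_nth norm_pentagonal_fps_nth_le)

lemma norm_prod_one_minus_power_le:
  fixes q :: complex
  assumes "norm q < 1" and "finite A"
  shows "norm (\<Prod>i\<in>A. 1 - q ^ i) \<le> exp (1 / (1 - norm q))"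
proof -
  have "norm (\<Prod>i\<in>A. 1 - q ^ i) \<le> (\<Prod>i\<in>A. norm (1 - q ^ i))" by (rule norm_prod_le)
  also have "\<dots> \<le> (\<Prod>i\<in>A. exp (norm q ^ i))"
  proof (rule prod_mono)
    fix i
    have "norm (1 - q ^ i) \<le> 1 + norm q ^ i"
      using norm_triangle_ineq4[of 1 "q ^ i"] by (simp add: norm_power)
    also have "\<dots> \<le> exp (norm q ^ i)" by (rule exp_ge_add_one_self)
    finally show "0 \<le> norm (1 - q ^ i) \<and> norm (1 - q ^ i) \<le> exp (norm q ^ i)" by simp
  qed
  also have "\<dots> = exp (\<Sum>i\<in>A. norm q ^ i)" by (rule exp_sum[OF assms(2), symmetric])
  also have "(\<Sum>i\<in>A. norm q ^ i) \<le> (\<Sum>i. norm q ^ i)"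
    using assms by (intro sum_le_suminf) (auto intro: summable_geometric)
  also have "(\<Sum>i. norm q ^ i) = 1 / (1 - norm q)" using assms by (simp add: suminf_geometric)
  finally show ?thesis by simp
qed

lemma norm_shanks_sum_minus_partial_prod_le:
  fixes q :: complex
  assumes q: "norm q < 1"
  shows "norm (shanks_sum m q - (\<Prod>i\<in>{1..m}. 1 - q ^ i))
           \<le> real m * (norm q ^ (m + 1) * exp (1 / (1 - norm q)))"
proof -
  define t where "t k = (- 1) ^ k * q ^ (m * k + triangular k) * (\<Prod>i\<in>{k + 1..m}. 1 - q ^ i)" for k
  have "shanks_sum m q = t 0 + (\<Sum>k\<in>{..m} - {0}. t k)"
    unfolding shanks_sum_def t_def by (rule sum.remove) auto
  then have "shanks_sum m q - (\<Prod>i\<in>{1..m}. 1 - q ^ i) = (\<Sum>k\<in>{..m} - {0}. t k)"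
    unfolding t_def by (simp add: triangular_def)
  also have "norm \<dots> \<le> (\<Sum>k\<in>{..m} - {0}. norm (t k))" by (rule norm_sum)
  also have "\<dots> \<le> (\<Sum>k\<in>{..m} - {0}. norm q ^ (m + 1) * exp (1 / (1 - norm q)))"
  proof (rule sum_mono)
    fix k assume k: "k \<in> {..m} - {0}"
    have "m \<le> m * k" "1 \<le> triangular k" using k triangular_ge_1[of k] by auto
    then have "m + 1 \<le> m * k + triangular k" by linarith
    then have "norm q ^ (m * k + triangular k) \<le> norm q ^ (m + 1)"
      using q by (intro power_decreasing) auto
    moreover have "norm (\<Prod>i\<in>{k + 1..m}. 1 - q ^ i) \<le> exp (1 / (1 - norm q))"
      by (rule norm_prod_one_minus_power_le[OF q]) simp
    moreover have "norm (t k) = norm q ^ (m * k + triangular k) * norm (\<Prod>i\<in>{k + 1..m}. 1 - q ^ i)"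
      unfolding t_def by (simp add: norm_mult norm_power)
    ultimately show "norm (t k) \<le> norm q ^ (m + 1) * exp (1 / (1 - norm q))"
      by (metis mult_mono norm_ge_zero zero_le_power)
  qed
  also have "\<dots> = real m * (norm q ^ (m + 1) * exp (1 / (1 - norm q)))" by simp
  finally show ?thesis .
qed

lemma shanks_sum_minus_partial_prod_tendsto_0:
  fixes q :: complex
  assumes q: "norm q < 1"
  shows "(\<lambda>m. shanks_sum m q - (\<Prod>i\<in>{1..m}. 1 - q ^ i)) \<longlonglongrightarrow> 0"
proof -
  have "(\<lambda>m. real m * norm q ^ m * (norm q * exp (1 / (1 - norm q)))) \<longlonglongrightarrow> 0"
    using powser_times_n_limit_0[of "norm q"] q by (intro tendsto_mult_left_zero) simp
  then have lim: "(\<lambda>m. real m * (norm q ^ (m + 1) * exp (1 / (1 - norm q)))) \<longlonglongrightarrow> 0"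
    by (simp add: algebra_simps)
  show ?thesis
    by (rule Lim_null_comparison[OF always_eventually lim])
      (use norm_shanks_sum_minus_partial_prod_le[OF q] in blast)
qed

lemma pentagonal_fps_partial_sum:
  "(\<Sum>k\<le>m. pentagonal_fps $ k * q ^ k) = (\<Sum>j | pentagonal j \<le> m. neg_one_pow j * q ^ pentagonal j)"
proof -
  have "(\<Sum>k\<le>m. pentagonal_fps $ k * q ^ k)
      = (\<Sum>k\<le>m. \<Sum>j\<in>{j. pentagonal j = k}. neg_one_pow j * q ^ pentagonal j)"
    unfolding pentagonal_fps_nth sum_distrib_right by (rule sum.cong) auto
  also have "\<dots> = (\<Sum>j\<in>(\<Union>k\<le>m. {j. pentagonal j = k}). neg_one_pow j * q ^ pentagonal j)"
    using finite_fibresD[OF finite_fibres_pentagonal] by (intro sum.UNION_disjoint[symmetric]) auto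
  also have "(\<Union>k\<le>m. {j. pentagonal j = k}) = {j. pentagonal j \<le> m}" by auto
  finally show ?thesis .
qed

lemma norm_pentagonal_sum_minus_partial_sum_le:
  fixes q :: complex
  assumes q: "norm q < 1"
  shows "norm (pentagonal_sum m q - (\<Sum>k\<le>m. pentagonal_fps $ k * q ^ k)) \<le> real (2 * m + 1) * norm q ^ (m + 1)"
proof -
  define L where "L = {j. pentagonal j \<le> m}"
  define M where "M = {- int m..int m}"
  have "L \<subseteq> M"
  proof
    fix j assume "j \<in> L"
    then show "j \<in> M" using abs_le_pentagonal[of j] unfolding L_def M_def by auto
  qed
  have "pentagonal_sum m q
      = (\<Sum>j\<in>M - L. neg_one_pow j * q ^ pentagonal j) + (\<Sum>j\<in>L. neg_one_pow j * q ^ pentagonal j)"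
    unfolding pentagonal_sum_def M_def[symmetric] by (rule sum.subset_diff[OF \<open>L \<subseteq> M\<close>]) (simp add: M_def)
  then have "pentagonal_sum m q - (\<Sum>k\<le>m. pentagonal_fps $ k * q ^ k)
      = (\<Sum>j\<in>M - L. neg_one_pow j * q ^ pentagonal j)"
    by (simp add: pentagonal_fps_partial_sum L_def)
  also have "norm \<dots> \<le> (\<Sum>j\<in>M - L. norm (neg_one_pow j * q ^ pentagonal j))" by (rule norm_sum)
  also have "\<dots> \<le> (\<Sum>j\<in>M - L. norm q ^ (m + 1))"
  proof (rule sum_mono)
    fix j assume "j \<in> M - L"
    then have "norm q ^ pentagonal j \<le> norm q ^ (m + 1)"
      unfolding L_def using q by (intro power_decreasing) auto
    then show "norm (neg_one_pow j * q ^ pentagonal j) \<le> norm q ^ (m + 1)"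
      by (simp add: norm_mult norm_power)
  qed
  also have "\<dots> \<le> real (card M) * norm q ^ (m + 1)"
    using card_mono[of M "M - L"] by (simp add: M_def mult_right_mono)
  also have "card M = 2 * m + 1" by (simp add: M_def)
  finally show ?thesis .
qed

lemma pentagonal_sum_minus_partial_sums_tendsto_0:
  fixes q :: complex
  assumes q: "norm q < 1"
  shows "(\<lambda>m. pentagonal_sum m q - (\<Sum>k\<le>m. pentagonal_fps $ k * q ^ k)) \<longlonglongrightarrow> 0"
proof -
  have "(\<lambda>m. 2 * norm q * (real m * norm q ^ m) + norm q * norm q ^ m) \<longlonglongrightarrow> 0"
    using tendsto_add[OF tendsto_mult_right_zero[OF powser_times_n_limit_0[of "norm q"]]
        tendsto_mult_right_zero[OF LIMSEQ_realpow_zero[of "norm q"]]] q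
    by simp
  then have lim: "(\<lambda>m. real (2 * m + 1) * norm q ^ (m + 1)) \<longlonglongrightarrow> 0"
    by (simp add: algebra_simps)
  show ?thesis
    by (rule Lim_null_comparison[OF always_eventually lim])
      (use norm_pentagonal_sum_minus_partial_sum_le[OF q] in blast)
qed

lemma convergent_prod_one_minus_mult_power:
  fixes a q :: complex
  assumes "norm q < 1"
  shows "convergent_prod (\<lambda>k. 1 - a * q ^ k)"
proof (rule abs_convergent_prod_imp_convergent_prod, rule summable_imp_abs_convergent_prod)
  show "summable (\<lambda>k. norm (1 - a * q ^ k - 1))"
    using assms by (simp add: norm_mult norm_power summable_geometric)
qed

lemma qpoch_self_nonzero:
  fixes q :: complex
  assumes "norm q < 1"
  shows "qpoch q q \<noteq> 0"
  unfolding qpoch_def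
proof (rule prodinf_nonzero[OF convergent_prod_one_minus_mult_power[OF assms]])
  fix k
  have "norm (q * q ^ k) = norm q ^ Suc k" by (simp add: norm_mult norm_power)
  also have "\<dots> < 1" using assms by (subst power_less_one_iff) auto
  finally show "1 - q * q ^ k \<noteq> 0" by (metis norm_one less_irrefl right_minus_eq)
qed

theorem qpoch_eq_eval_pentagonal_fps:
  fixes q :: complex
  assumes q: "norm q < 1"
  shows "qpoch q q = eval_fps pentagonal_fps q"
proof -
  have "(\<lambda>n. \<Prod>k\<le>n. 1 - q * q ^ k) \<longlonglongrightarrow> qpoch q q"
    unfolding qpoch_def by (rule convergent_prod_LIMSEQ[OF convergent_prod_one_minus_mult_power[OF q]])
  moreover have "(\<Prod>k\<le>n. 1 - q * q ^ k) = (\<Prod>i\<in>{1..Suc n}. 1 - q ^ i)" for n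
    using prod.shift_bounds_cl_Suc_ivl[of "\<lambda>i. 1 - q ^ i" 0 n] by (simp add: atMost_atLeast0)
  ultimately have prod_lim: "(\<lambda>m. \<Prod>i\<in>{1..m}. 1 - q ^ i) \<longlonglongrightarrow> qpoch q q"
    using filterlim_sequentially_Suc[of "\<lambda>m. \<Prod>i\<in>{1..m}. 1 - q ^ i"] by simp
  have "ereal (norm q) < fps_conv_radius (pentagonal_fps :: complex fps)"
    using fps_conv_radius_pentagonal_fps q by (rule ereal_norm_less_fps_conv_radius)
  then have "(\<lambda>m. \<Sum>k<Suc m. pentagonal_fps $ k * q ^ k) \<longlonglongrightarrow> eval_fps pentagonal_fps q"
    using sums_eval_fps LIMSEQ_Suc unfolding sums_def by blast
  then have sum_lim: "(\<lambda>m. \<Sum>k\<le>m. pentagonal_fps $ k * q ^ k) \<longlonglongrightarrow> eval_fps pentagonal_fps q"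
    by (simp add: lessThan_Suc_atMost)
  have "(\<lambda>m. (\<Sum>k\<le>m. pentagonal_fps $ k * q ^ k)
      + ((pentagonal_sum m q - (\<Sum>k\<le>m. pentagonal_fps $ k * q ^ k))
      - (shanks_sum m q - (\<Prod>i\<in>{1..m}. 1 - q ^ i)))) \<longlonglongrightarrow> eval_fps pentagonal_fps q + (0 - 0)"
    using pentagonal_sum_minus_partial_sums_tendsto_0[OF q] shanks_sum_minus_partial_prod_tendsto_0[OF q]
    by (intro tendsto_add sum_lim tendsto_diff)
  then have "(\<lambda>m. \<Prod>i\<in>{1..m}. 1 - q ^ i) \<longlonglongrightarrow> eval_fps pentagonal_fps q"
    by (simp add: shanks_identity)
  with prod_lim show ?thesis by (rule LIMSEQ_unique)
qed

lemma eval_fps_fps_dilate_pentagonal_fps: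
  fixes z :: complex
  assumes "norm z < 1" "k > 0"
  shows "eval_fps (fps_dilate k pentagonal_fps) z = qpoch (z ^ k) (z ^ k)"
proof -
  have "norm (z ^ k) < 1" using assms by (simp add: norm_power power_less_one_iff)
  then show ?thesis
    using assms(2) by (simp add: eval_fps_fps_dilate ereal_norm_less_fps_conv_radius
        fps_conv_radius_pentagonal_fps qpoch_eq_eval_pentagonal_fps)
qed

section \<open>Coefficients of the quotient\<close>

lemma fps_dilate_3_diff_fps_X_mult_nth:
  "(fps_dilate 3 U - fps_X * fps_dilate 3 V) $ n
     = (if n mod 3 = 0 then U $ (n div 3) else if n mod 3 = 1 then - V $ (n div 3) else (0 :: 'a::comm_ring_1))"
proof -
  consider "n mod 3 = 0" | "n mod 3 = 1" | "n mod 3 = 2" by atomize_elim presburger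
  then show ?thesis
  proof cases
    case 1
    then have "3 dvd n" "n \<noteq> 0 \<Longrightarrow> \<not> 3 dvd (n - 1)" by presburger+
    then show ?thesis using 1 by (simp add: fps_X_mult_nth fps_dilate_nth)
  next
    case 2
    then have "\<not> 3 dvd n" "n \<noteq> 0" "3 dvd (n - 1)" "(n - 1) div 3 = n div 3" by presburger+
    then show ?thesis using 2 by (simp add: fps_X_mult_nth fps_dilate_nth)
  next
    case 3
    then have "\<not> 3 dvd n" "n \<noteq> 0" "\<not> 3 dvd (n - 1)" by presburger+
    then show ?thesis using 3 by (simp add: fps_X_mult_nth fps_dilate_nth)
  qed
qed

lemma fps_mult_fps_dilate_pentagonal_fps_sq:
  fixes F :: "complex fps"
  assumes sums: "\<And>q. norm q < 1 \<Longrightarrow> (\<lambda>n. F $ n * q ^ n) sums (qpoch q q ^ 3 / qpoch (q ^ 3) (q ^ 3) ^ 2)"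
  shows "F * fps_dilate 3 pentagonal_fps ^ 2 = pentagonal_fps ^ 3"
proof (rule eval_fps_eqD)
  define G :: "complex fps" where "G = fps_dilate 3 pentagonal_fps"
  have F_radius: "fps_conv_radius F \<ge> 1"
    using sums by (rule fps_conv_radius_ge_1_if_sums)
  have G_radius: "fps_conv_radius G \<ge> 1"
    unfolding G_def by (rule fps_conv_radius_fps_dilate_pentagonal_fps)
  have G2_radius: "fps_conv_radius (G ^ 2) \<ge> 1"
    using G_radius fps_conv_radius_power by (rule order.trans)
  have FG_radius: "fps_conv_radius (F * G ^ 2) \<ge> 1"
    by (rule order.trans[OF min.boundedI[OF F_radius G2_radius] fps_conv_radius_mult])
  have P3_radius: "fps_conv_radius (pentagonal_fps ^ 3 :: complex fps) \<ge> 1"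
    by (rule order.trans[OF fps_conv_radius_pentagonal_fps fps_conv_radius_power])
  show "fps_conv_radius (F * fps_dilate 3 pentagonal_fps ^ 2) > 0"
    using FG_radius unfolding G_def by (rule less_le_trans[rotated]) simp
  show "fps_conv_radius (pentagonal_fps ^ 3 :: complex fps) > 0"
    using P3_radius by (rule less_le_trans[rotated]) simp
  have "eval_fps (F * G ^ 2) z = eval_fps (pentagonal_fps ^ 3) z" if z: "norm z < 1" for z
  proof -
    have eval_G: "eval_fps G z = qpoch (z ^ 3) (z ^ 3)"
      unfolding G_def using z by (rule eval_fps_fps_dilate_pentagonal_fps) simp
    have "eval_fps (F * G ^ 2) z = eval_fps F z * eval_fps G z ^ 2"
      using z F_radius G_radius G2_radius
      by (simp add: eval_fps_mult eval_fps_power ereal_norm_less_fps_conv_radius)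
    also have "eval_fps F z = qpoch z z ^ 3 / qpoch (z ^ 3) (z ^ 3) ^ 2"
      unfolding eval_fps_def by (rule sums_unique[symmetric, OF sums[OF z]])
    also have "qpoch z z ^ 3 / qpoch (z ^ 3) (z ^ 3) ^ 2 * eval_fps G z ^ 2 = qpoch z z ^ 3"
      unfolding eval_G using z qpoch_self_nonzero[of "z ^ 3"] by (simp add: norm_power power_less_one_iff)
    also have "\<dots> = eval_fps (pentagonal_fps ^ 3) z"
      using z by (simp add: eval_fps_power ereal_norm_less_fps_conv_radius fps_conv_radius_pentagonal_fps
          qpoch_eq_eval_pentagonal_fps)
    finally show ?thesis .
  qed
  moreover have "eventually (\<lambda>z. z \<in> ball 0 1) (nhds (0 :: complex))"
    by (rule eventually_nhds_in_open) auto
  ultimately show "eventually (\<lambda>z. eval_fps (F * fps_dilate 3 pentagonal_fps ^ 2) z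
      = eval_fps (pentagonal_fps ^ 3) z) (nhds 0)"
    unfolding G_def by (simp add: eventually_mono)
qed

lemma fps_eq_borwein_quotient:
  fixes F :: "complex fps"
  assumes "F * fps_dilate 3 pentagonal_fps ^ 2 = pentagonal_fps ^ 3"
  shows "F = fps_dilate 3 (borwein_a_fps * inverse pentagonal_fps)
           - fps_X * fps_dilate 3 (borwein_c_fps * inverse pentagonal_fps)"
proof -
  define G :: "complex fps" where "G = fps_dilate 3 pentagonal_fps"
  define R :: "complex fps" where "R = fps_dilate 3 borwein_a_fps - fps_X * fps_dilate 3 borwein_c_fps"
  have "G $ 0 = 1" unfolding G_def by (simp add: fps_dilate_nth pentagonal_fps_nth_0)
  then have "G \<noteq> 0" by auto
  moreover have "G * (F * G) = G * R"
    using assms pentagonal_fps_cube_dissection unfolding G_def R_def by (simp add: power2_eq_square ac_simps)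
  ultimately have "F * G = R" by simp
  moreover have "G * fps_dilate 3 (inverse pentagonal_fps) = 1"
    unfolding G_def fps_dilate_mult[symmetric, OF zero_less_numeral]
    by (simp add: inverse_mult_eq_1' pentagonal_fps_nth_0 fps_dilate_1)
  ultimately have "F = R * fps_dilate 3 (inverse pentagonal_fps)"
    by (metis mult.assoc mult_1_right)
  then show ?thesis
    unfolding R_def by (simp add: fps_dilate_mult algebra_simps)
qed

theorem theorem1p3:
  fixes a :: "nat \<Rightarrow> real"
  assumes "\<forall>q::complex. norm q < 1 \<longrightarrow>
      (\<lambda>n. complex_of_real (a n) * q ^ n) sums (qpoch q q ^ 3 / qpoch (q ^ 3) (q ^ 3) ^ 2)"
  shows "\<forall>n. (n mod 3 = 0 \<longrightarrow> a n > 0) \<and> (n mod 3 = 1 \<longrightarrow> a n < 0) \<and> (n mod 3 = 2 \<longrightarrow> a n = 0)"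
proof
  fix n
  have "Abs_fps (\<lambda>n. complex_of_real (a n)) = fps_dilate 3 (borwein_a_fps * inverse pentagonal_fps)
           - fps_X * fps_dilate 3 (borwein_c_fps * inverse pentagonal_fps)"
    using assms by (intro fps_eq_borwein_quotient fps_mult_fps_dilate_pentagonal_fps_sq) simp
  from arg_cong[OF this, of "\<lambda>F. F $ n"]
  have a_n: "complex_of_real (a n) = (if n mod 3 = 0 then (borwein_a_fps * inverse pentagonal_fps) $ (n div 3)
      else if n mod 3 = 1 then - (borwein_c_fps * inverse pentagonal_fps) $ (n div 3) else 0)"
    by (simp only: fps_nth_Abs_fps fps_dilate_3_diff_fps_X_mult_nth)
  obtain A C where "A \<ge> 1" "C \<ge> 1"
    and "(borwein_a_fps * inverse pentagonal_fps :: complex fps) $ (n div 3) = of_nat A"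
    and "(borwein_c_fps * inverse pentagonal_fps :: complex fps) $ (n div 3) = of_nat C"
    using borwein_a_fps_mult_inverse_pentagonal_fps_nth_pos borwein_c_fps_mult_inverse_pentagonal_fps_nth_pos
    by metis
  with a_n have "complex_of_real (a n)
      = complex_of_real (if n mod 3 = 0 then real A else if n mod 3 = 1 then - real C else 0)"
    by simp
  with \<open>A \<ge> 1\<close> \<open>C \<ge> 1\<close>
  show "(n mod 3 = 0 \<longrightarrow> a n > 0) \<and> (n mod 3 = 1 \<longrightarrow> a n < 0) \<and> (n mod 3 = 2 \<longrightarrow> a n = 0)"
    by (simp only: of_real_eq_iff) simp
qed

end
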